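(* Let $N\ge2$, $n\ge1$, $\tilde J>0$ and $J_i=\tilde J/N^i$ for $1\le i\le n$. For all integers $1\le s\le N$ and $0\le m\le n-1$, $$\max_{1\le i\le N^n}\mathcal H\big(h^{(m,s)};\gamma_i\big)=\max_{1\le i\le sN^m}\mathcal H\big(h^{(m,s)};\gamma_i\big).$$
   Context: Hierarchical lattice $\Lambda_N^n=\{1,\dots,N^n\}$ (integer $a$ = vertex $v_a$); $k$-blocks are $\{jN^k+1,\dots,(j+1)N^k\}$; $d(a,b)$ is the smallest $k\ge0$ with $a,b$ in a common $k$-block. For a field $h$, $\mathcal H(h;\sigma)=-\frac12\sum_{\{v,w\},v\ne w}J_{d(v,w)}\sigma(v)\sigma(w)-\frac h2\sum_v\sigma(v)$ (unordered pairs). $\gamma_k$ is the configuration with $+1$ exactly on $\{1,\dots,k\}$. For integers $m,s$, $h^{(m,s)}=\tilde J\big[(1-\frac1N)(n-m)-(s-1)\frac1N\big]$. *)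

theory Defs
  imports Complex_Main
begin

text \<open>Hierarchical lattice with vertices 1..N^n. The k-block containing vertex a
  has index (a-1) div N^k. The hierarchical distance d(a,b) is the least k
  with a, b in a common k-block.\<close>

definition hdist :: "nat \<Rightarrow> nat \<Rightarrow> nat \<Rightarrow> nat" where
  "hdist N a b = (LEAST k. (a - 1) div N ^ k = (b - 1) div N ^ k)"

text \<open>Hamiltonian: sum over unordered pairs {v,w}, v \<noteq> w, written as pairs v < w.\<close>

definition hamiltonian ::
  "nat \<Rightarrow> nat \<Rightarrow> (nat \<Rightarrow> real) \<Rightarrow> real \<Rightarrow> (nat \<Rightarrow> real) \<Rightarrow> real" where
  "hamiltonian N n J h \<sigma> =
     - (1/2) * (\<Sum>(v,w) \<in> {(v,w). 1 \<le> v \<and> v < w \<and> w \<le> N ^ n}.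
                   J (hdist N v w) * \<sigma> v * \<sigma> w)
     - (h / 2) * (\<Sum>v \<in> {1..N ^ n}. \<sigma> v)"

definition gamma :: "nat \<Rightarrow> nat \<Rightarrow> real" where
  "gamma k v = (if 1 \<le> v \<and> v \<le> k then 1 else -1)"

definition hfield :: "nat \<Rightarrow> nat \<Rightarrow> real \<Rightarrow> int \<Rightarrow> int \<Rightarrow> real" where
  "hfield N n Jt m s =
     Jt * ((1 - 1 / real N) * (real n - real_of_int m) - (real_of_int s - 1) / real N)"

end

theory Submission
  imports Defs
begin

text \<open>Index the vertices from 0 and let S(a) be the base-N digit sum of a. The couplings
  N^-d from a to the vertices below it sum to S(a)/N, and to those above it to (n(N-1) - S(a))/N;
  hence turning vertex a of gamma_a up raises the energy at field h^(m,s) by (J/N)(c - 2 S(a)),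
  where c = (N-1)m + s - 1. So H(gamma_K) - H(gamma_0) is J/N times the walk
  W(K) = sum_{j<K} (c - 2 S(j)), which is self-similar: W(x N^p + L) = W(x N^p) + W(L) - 2 L S(x)
  for L <= N^p. Since W(N^(m+1)) = N^(m+1) (s - N) <= 0, reducing K modulo N^(m+1) does not lower W;
  and since W(t N^m) = N^m t (s - t), neither does lowering a leading digit t >= s of the remainder
  to s - 1.\<close>

lemma sum_lessThan_add:
  fixes f :: "nat \<Rightarrow> 'a::comm_monoid_add"
  shows "(\<Sum>j<a + b. f j) = (\<Sum>j<a. f j) + (\<Sum>j<b. f (a + j))"
  by (induction b) (simp_all add: add.assoc)

lemma sum_lessThan_mult:
  fixes f :: "nat \<Rightarrow> 'a::comm_monoid_add"
  shows "(\<Sum>b<M * N. f b) = (\<Sum>x<M. \<Sum>y<N. f (x * N + y))"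
  unfolding sum.nat_group[symmetric]
  by (simp add: sum.atLeastLessThan_shift_0 atLeast0LessThan)

definition digit_sum :: "nat \<Rightarrow> nat \<Rightarrow> nat \<Rightarrow> nat" where
  "digit_sum N n a = (\<Sum>i<n. a div N ^ i mod N)"

lemma digit_sum_0_right [simp]: "digit_sum N n 0 = 0"
  by (simp add: digit_sum_def)

lemma digit_sum_Suc: "digit_sum N (Suc n) a = a mod N + digit_sum N n (a div N)"
  unfolding digit_sum_def sum.lessThan_Suc_shift
  by (simp add: div_mult2_eq mult.commute)

lemma digit_sum_mult_add:
  assumes "y < N"
  shows "digit_sum N (Suc n) (x * N + y) = y + digit_sum N n x"
  using assms by (simp add: digit_sum_Suc)

lemma digit_sum_digit:
  assumes "t < N" and "n \<ge> 1"
  shows "digit_sum N n t = t"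
  using assms by (cases n) (simp_all add: digit_sum_Suc)

lemma digit_sum_mult_power_add:
  assumes "p \<le> n" and "j < N ^ p"
  shows "digit_sum N n (x * N ^ p + j) = digit_sum N n j + digit_sum N (n - p) x"
  using assms
proof (induction p arbitrary: n j)
  case 0
  then show ?case by simp
next
  case (Suc p)
  then obtain n' where n: "n = Suc n'" by (cases n) auto
  have "j div N < N ^ p"
    using Suc.prems by (simp add: less_mult_imp_div_less mult.commute)
  moreover have "x * N ^ Suc p + j = (x * N ^ p + j div N) * N + j mod N"
    by (simp add: algebra_simps)
  moreover have "j mod N < N"
    using Suc.prems(2) by (cases "N = 0") simp_all
  ultimately show ?case
    using Suc.IH[of n' "j div N"] Suc.prems n by (simp add: digit_sum_Suc)
qed

lemma sum_digit_sum_power: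
  assumes "p \<le> n"
  shows "(\<Sum>j<N ^ p. real (digit_sum N n j)) = real p * (real N - 1) * real N ^ p / 2"
  using assms
proof (induction p arbitrary: n)
  case 0
  then show ?case by simp
next
  case (Suc p)
  then obtain n' where n: "n = Suc n'" by (cases n) auto
  have gauss: "(\<Sum>y<N. real y) = real N * (real N - 1) / 2"
    by (induction N) (simp_all add: field_simps)
  have IH: "(\<Sum>x<N ^ p. real (digit_sum N n' x)) = real p * (real N - 1) * real N ^ p / 2"
    using Suc n by simp
  have "(\<Sum>j<N ^ Suc p. real (digit_sum N n j))
      = (\<Sum>x<N ^ p. \<Sum>y<N. real y + real (digit_sum N n' x))"
    unfolding power_Suc2 sum_lessThan_mult n by (simp add: digit_sum_mult_add)
  also have "\<dots> = real N ^ p * (\<Sum>y<N. real y) + real N * (\<Sum>x<N ^ p. real (digit_sum N n' x))"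
    by (simp add: sum.distrib sum_distrib_left)
  also have "\<dots> = real N ^ p * (real N * (real N - 1)) / 2
                   + real N * (real p * (real N - 1) * real N ^ p) / 2"
    by (simp only: gauss IH)
  finally show ?case
    by (simp add: field_simps)
qed

lemma mult_add_less_mult_add_iff:
  fixes x y x' y' N :: nat
  assumes "y < N" and "y' < N"
  shows "x * N + y < x' * N + y' \<longleftrightarrow> x < x' \<or> (x = x' \<and> y < y')"
proof (cases x x' rule: linorder_cases)
  case less
  have "x * N + y < Suc x * N"
    using assms by simp
  moreover have "Suc x * N \<le> x' * N"
    using less by (intro mult_le_mono1) simp
  ultimately show ?thesis
    using less by linarith
next
  case greater
  have "x' * N + y' < Suc x' * N"
    using assms by simp
  moreover have "Suc x' * N \<le> x * N"
    using greater by (intro mult_le_mono1) simp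
  ultimately show ?thesis
    using greater by linarith
qed simp

definition block_dist :: "nat \<Rightarrow> nat \<Rightarrow> nat \<Rightarrow> nat" where
  "block_dist N a b = (LEAST k. a div N ^ k = b div N ^ k)"

lemma hdist_Suc_Suc: "hdist N (Suc a) (Suc b) = block_dist N a b"
  by (simp add: hdist_def block_dist_def)

lemma block_dist_commute: "block_dist N a b = block_dist N b a"
  by (simp add: block_dist_def eq_commute)

lemma block_dist_self [simp]: "block_dist N a a = 0"
  by (simp add: block_dist_def)

lemma block_dist_le:
  assumes "a < N ^ n" and "b < N ^ n"
  shows "block_dist N a b \<le> n"
  unfolding block_dist_def using assms by (intro Least_le) simp

lemma block_dist_Suc:
  assumes "N \<ge> 2" and "a \<noteq> b"
  shows "block_dist N a b = Suc (block_dist N (a div N) (b div N))"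
proof -
  have "a + b < N ^ (a + b)"
    using less_exp[of "a + b"] power_mono[of 2 N "a + b"] assms(1) by linarith
  then have "a < N ^ (a + b)" and "b < N ^ (a + b)"
    by simp_all
  then have "(LEAST k. a div N ^ k = b div N ^ k) = Suc (LEAST k. a div N ^ Suc k = b div N ^ Suc k)"
    using assms(2) by (intro Least_Suc[of _ "a + b"]) simp_all
  then show ?thesis
    unfolding block_dist_def by (simp add: div_mult2_eq mult.commute)
qed

lemma sum_power_block_dist_lex:
  fixes R :: "nat \<Rightarrow> nat \<Rightarrow> bool"
  assumes N: "N \<ge> 2" and "a < N ^ n" and irrefl: "\<And>x. \<not> R x x"
    and lex: "\<And>x y x' y'. y < N \<Longrightarrow> y' < N \<Longrightarrow>
                R (x * N + y) (x' * N + y') \<longleftrightarrow> R x x' \<or> (x = x' \<and> R y y')"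
  shows "(\<Sum>b<N ^ n. if R b a then 1 / real N ^ block_dist N a b else 0)
       = (\<Sum>i<n. real (card {y. y < N \<and> R y (a div N ^ i mod N)})) / real N"
  using \<open>a < N ^ n\<close>
proof (induction n arbitrary: a)
  case 0
  then show ?case by (simp add: irrefl)
next
  case (Suc n)
  define a' a0 where "a' = a div N" and "a0 = a mod N"
  have a: "a = a' * N + a0" and a0: "a0 < N"
    using N by (simp_all add: a'_def a0_def)
  have a': "a' < N ^ n"
    using Suc.prems by (simp add: a'_def less_mult_imp_div_less mult.commute)
  have summand: "(if R (x * N + y) a then 1 / real N ^ block_dist N a (x * N + y) else 0)
      = (if R x a' then 1 / real N ^ block_dist N a' x else 0) / real N
        + (if x = a' \<and> R y a0 then 1 / real N else 0)" if "y < N" for x y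
  proof (cases "R (x * N + y) a")
    case True
    then have "block_dist N a (x * N + y) = Suc (block_dist N a' x)"
      using block_dist_Suc[OF N, of a "x * N + y"] irrefl[of a] that by (auto simp: a'_def)
    then show ?thesis
      using True lex[OF that a0, of x a'] irrefl[of x] by (auto simp: a)
  next
    case False
    then show ?thesis
      using lex[OF that a0, of x a'] by (auto simp: a)
  qed
  have "(\<Sum>b<N ^ Suc n. if R b a then 1 / real N ^ block_dist N a b else 0)
      = (\<Sum>x<N ^ n. (if R x a' then 1 / real N ^ block_dist N a' x else 0)
                    + (if x = a' then real (card {y. y < N \<and> R y a0}) / real N else 0))"
    unfolding power_Suc2 sum_lessThan_mult
  proof (intro sum.cong refl)
    fix x
    have "(\<Sum>y<N. if x = a' \<and> R y a0 then 1 / real N else 0)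
        = (if x = a' then real (card {y. y < N \<and> R y a0}) / real N else 0)"
      by (simp add: sum.If_cases Int_def)
    then show "(\<Sum>y<N. if R (x * N + y) a then 1 / real N ^ block_dist N a (x * N + y) else 0)
        = (if R x a' then 1 / real N ^ block_dist N a' x else 0)
          + (if x = a' then real (card {y. y < N \<and> R y a0}) / real N else 0)"
      using N by (simp add: summand sum.distrib)
  qed
  also have "\<dots> = (\<Sum>i<n. real (card {y. y < N \<and> R y (a' div N ^ i mod N)})) / real N
                  + real (card {y. y < N \<and> R y a0}) / real N"
    using Suc.IH[OF a'] a' by (simp add: sum.distrib)
  finally show ?case
    unfolding sum.lessThan_Suc_shift a'_def a0_def
    by (simp add: div_mult2_eq mult.commute add_divide_distrib)
qed

lemma sum_power_block_dist_below:
  assumes "N \<ge> 2" and "a < N ^ n"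
  shows "(\<Sum>b<N ^ n. if b < a then 1 / real N ^ block_dist N a b else 0)
       = real (digit_sum N n a) / real N"
proof -
  have "{y. y < N \<and> y < a div N ^ i mod N} = {..<a div N ^ i mod N}" for i
    using mod_less_divisor[of N "a div N ^ i"] assms(1) by fastforce
  then show ?thesis
    using sum_power_block_dist_lex[OF assms, of "(<)"] mult_add_less_mult_add_iff
    by (simp add: digit_sum_def)
qed

lemma sum_power_block_dist_above:
  assumes "N \<ge> 2" and "a < N ^ n"
  shows "(\<Sum>b<N ^ n. if a < b then 1 / real N ^ block_dist N a b else 0)
       = (real n * (real N - 1) - real (digit_sum N n a)) / real N"
proof -
  have "{y. y < N \<and> a div N ^ i mod N < y} = {a div N ^ i mod N<..<N}" for i
    by auto
  moreover have "real (N - Suc (a div N ^ i mod N)) = real N - 1 - real (a div N ^ i mod N)" for i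
    using assms(1) by (simp add: of_nat_diff Suc_leI)
  moreover have "y < N \<Longrightarrow> y' < N \<Longrightarrow> x' * N + y' < x * N + y \<longleftrightarrow> x' < x \<or> (x = x' \<and> y' < y)"
    for x y x' y' :: nat
    using mult_add_less_mult_add_iff by auto
  ultimately show ?thesis
    using sum_power_block_dist_lex[where R = "\<lambda>b a. a < b", OF assms]
    by (simp add: digit_sum_def sum_subtractf)
qed

lemma sum_ordered_pairs:
  fixes f :: "nat \<Rightarrow> nat \<Rightarrow> real"
  shows "(\<Sum>(v, w) \<in> {(v, w). 1 \<le> v \<and> v < w \<and> w \<le> Q}. f v w)
       = (\<Sum>v\<in>{1..Q}. \<Sum>w\<in>{1..Q}. if v < w then f v w else 0)"
proof -
  have "{(v, w). 1 \<le> v \<and> v < w \<and> w \<le> Q} = Sigma {1..Q} (\<lambda>v. {1..Q} \<inter> {v<..})"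
    by auto
  then have "(\<Sum>(v, w) \<in> {(v, w). 1 \<le> v \<and> v < w \<and> w \<le> Q}. f v w)
      = (\<Sum>v\<in>{1..Q}. \<Sum>w\<in>{1..Q} \<inter> {v<..}. f v w)"
    by (simp add: sum.Sigma)
  then show ?thesis
    by (simp add: sum.inter_restrict)
qed

lemma sum_ordered_pairs_flip:
  fixes g :: "nat \<Rightarrow> nat \<Rightarrow> real" and \<sigma> :: "nat \<Rightarrow> real"
  assumes k: "k \<in> {1..Q}" and "\<sigma> k = -1"
  shows "(\<Sum>(v, w) \<in> {(v, w). 1 \<le> v \<and> v < w \<and> w \<le> Q}. g v w * (\<sigma>(k := 1)) v * (\<sigma>(k := 1)) w)
       - (\<Sum>(v, w) \<in> {(v, w). 1 \<le> v \<and> v < w \<and> w \<le> Q}. g v w * \<sigma> v * \<sigma> w)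
       = 2 * (\<Sum>w\<in>{1..Q}. if k < w then g k w * \<sigma> w else 0)
         + 2 * (\<Sum>v\<in>{1..Q}. if v < k then g v k * \<sigma> v else 0)"
proof -
  have "(if v < w then g v w * (\<sigma>(k := 1)) v * (\<sigma>(k := 1)) w else 0)
        - (if v < w then g v w * \<sigma> v * \<sigma> w else 0)
      = (if v = k then (if k < w then 2 * g k w * \<sigma> w else 0) else 0)
        + (if w = k then (if v < k then 2 * g v k * \<sigma> v else 0) else 0)" for v w
    using assms(2) by auto
  then have "?thesis \<longleftrightarrow>
      (\<Sum>v\<in>{1..Q}. \<Sum>w\<in>{1..Q}. if v = k then (if k < w then 2 * g k w * \<sigma> w else 0) else 0)
      + (\<Sum>v\<in>{1..Q}. \<Sum>w\<in>{1..Q}. if w = k then (if v < k then 2 * g v k * \<sigma> v else 0) else 0)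
      = 2 * (\<Sum>w\<in>{1..Q}. if k < w then g k w * \<sigma> w else 0)
        + 2 * (\<Sum>v\<in>{1..Q}. if v < k then g v k * \<sigma> v else 0)"
    by (simp only: sum_ordered_pairs sum_subtractf[symmetric] sum.distrib)
  moreover have "(\<Sum>v\<in>{1..Q}. \<Sum>w\<in>{1..Q}. if v = k then (if k < w then 2 * g k w * \<sigma> w else 0) else 0)
      = 2 * (\<Sum>w\<in>{1..Q}. if k < w then g k w * \<sigma> w else 0)"
    using k by (subst sum.swap) (auto simp: sum.delta' sum_distrib_left intro!: sum.cong)
  moreover have "(\<Sum>v\<in>{1..Q}. \<Sum>w\<in>{1..Q}. if w = k then (if v < k then 2 * g v k * \<sigma> v else 0) else 0)
      = 2 * (\<Sum>v\<in>{1..Q}. if v < k then g v k * \<sigma> v else 0)"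
    using k by (auto simp: sum.delta' sum_distrib_left intro!: sum.cong)
  ultimately show ?thesis
    by simp
qed

lemma gamma_Suc: "gamma (Suc a) = (gamma a)(Suc a := 1)"
  by (auto simp: gamma_def)

lemma hamiltonian_gamma_Suc:
  assumes "a < N ^ n"
  shows "hamiltonian N n J h (gamma (Suc a)) - hamiltonian N n J h (gamma a)
       = (\<Sum>b<N ^ n. if a < b then J (block_dist N a b) else 0)
         - (\<Sum>b<N ^ n. if b < a then J (block_dist N a b) else 0) - h"
proof -
  have k: "Suc a \<in> {1..N ^ n}"
    using assms by simp
  have "(\<Sum>v\<in>{1..N ^ n}. gamma (Suc a) v) - (\<Sum>v\<in>{1..N ^ n}. gamma a v)
      = (\<Sum>v\<in>{1..N ^ n}. if v = Suc a then 2 else 0)"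
    unfolding sum_subtractf[symmetric] by (intro sum.cong refl) (auto simp: gamma_def)
  then have field: "(\<Sum>v\<in>{1..N ^ n}. gamma (Suc a) v) - (\<Sum>v\<in>{1..N ^ n}. gamma a v) = 2"
    using k by (simp add: sum.delta')
  have "(\<Sum>w\<in>{1..N ^ n}. if Suc a < w then J (hdist N (Suc a) w) * gamma a w else 0)
      = - (\<Sum>b<N ^ n. if a < b then J (block_dist N a b) else 0)"
    unfolding sum_negf[symmetric] sum.atLeast1_atMost_eq[unfolded One_nat_def[symmetric]]
    by (intro sum.cong refl) (simp add: hdist_Suc_Suc gamma_def)
  moreover have "(\<Sum>v\<in>{1..N ^ n}. if v < Suc a then J (hdist N v (Suc a)) * gamma a v else 0)
      = (\<Sum>b<N ^ n. if b < a then J (block_dist N a b) else 0)"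
    unfolding sum.atLeast1_atMost_eq[unfolded One_nat_def[symmetric]]
    by (intro sum.cong refl) (simp add: hdist_Suc_Suc gamma_def block_dist_commute)
  ultimately show ?thesis
    using sum_ordered_pairs_flip[OF k, of "gamma a" "\<lambda>v w. J (hdist N v w)"] field
    unfolding hamiltonian_def gamma_Suc by (simp add: gamma_def algebra_simps)
qed

lemma hamiltonian_gamma_Suc_hierarchical:
  assumes N: "N \<ge> 2" and a: "a < N ^ n"
    and J: "\<And>i. 1 \<le> i \<Longrightarrow> i \<le> n \<Longrightarrow> J i = Jt / real N ^ i"
  shows "hamiltonian N n J h (gamma (Suc a)) - hamiltonian N n J h (gamma a)
       = Jt / real N * (real n * (real N - 1) - 2 * real (digit_sum N n a)) - h"
proof -
  have coupling: "J (block_dist N a b) = Jt * (1 / real N ^ block_dist N a b)"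
    if "b < N ^ n" and "b \<noteq> a" for b
    using J block_dist_Suc[OF N, of a b] block_dist_le[OF a that(1)] that(2) by simp
  have "(\<Sum>b<N ^ n. if a < b then J (block_dist N a b) else 0)
      = Jt * (\<Sum>b<N ^ n. if a < b then 1 / real N ^ block_dist N a b else 0)"
    unfolding sum_distrib_left by (intro sum.cong refl) (simp add: coupling)
  moreover have "(\<Sum>b<N ^ n. if b < a then J (block_dist N a b) else 0)
      = Jt * (\<Sum>b<N ^ n. if b < a then 1 / real N ^ block_dist N a b else 0)"
    unfolding sum_distrib_left by (intro sum.cong refl) (simp add: coupling)
  ultimately show ?thesis
    using N by (simp add: hamiltonian_gamma_Suc[OF a] sum_power_block_dist_above[OF N a]
        sum_power_block_dist_below[OF N a] field_simps)
qed

definition digit_walk :: "nat \<Rightarrow> nat \<Rightarrow> real \<Rightarrow> nat \<Rightarrow> real" where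
  "digit_walk N n c K = (\<Sum>j<K. c - 2 * real (digit_sum N n j))"

lemma hamiltonian_gamma_digit_walk:
  assumes N: "N \<ge> 2" and "K \<le> N ^ n"
    and J: "\<And>i. 1 \<le> i \<Longrightarrow> i \<le> n \<Longrightarrow> J i = Jt / real N ^ i"
  shows "hamiltonian N n J (hfield N n Jt (int m) (int s)) (gamma K)
       = hamiltonian N n J (hfield N n Jt (int m) (int s)) (gamma 0)
         + Jt / real N * digit_walk N n ((real N - 1) * real m + real s - 1) K"
  using \<open>K \<le> N ^ n\<close>
proof (induction K)
  case 0
  then show ?case by (simp add: digit_walk_def)
next
  case (Suc K)
  let ?H = "\<lambda>k. hamiltonian N n J (hfield N n Jt (int m) (int s)) (gamma k)"
  let ?c = "(real N - 1) * real m + real s - 1"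
  let ?d = "real (digit_sum N n K)"
  have "?H (Suc K) - ?H K
      = Jt / real N * (real n * (real N - 1) - 2 * ?d) - hfield N n Jt (int m) (int s)"
    using Suc.prems by (intro hamiltonian_gamma_Suc_hierarchical[OF N _ J]) simp
  moreover have "hfield N n Jt (int m) (int s) = Jt / real N * (real n * (real N - 1) - ?c)"
    using N by (simp add: hfield_def field_simps)
  moreover have "Jt / real N * (real n * (real N - 1) - 2 * ?d) - Jt / real N * (real n * (real N - 1) - ?c)
      = Jt / real N * (?c - 2 * ?d)"
    by (simp add: algebra_simps)
  ultimately have "?H (Suc K) = ?H K + Jt / real N * (?c - 2 * ?d)"
    by linarith
  then show ?case
    using Suc by (simp add: digit_walk_def algebra_simps)
qed

lemma digit_walk_mult_power_add:
  assumes "p \<le> n" and "L \<le> N ^ p"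
  shows "digit_walk N n c (x * N ^ p + L)
       = digit_walk N n c (x * N ^ p) + digit_walk N n c L - 2 * real L * real (digit_sum N (n - p) x)"
proof -
  have "digit_walk N n c (x * N ^ p + L)
      = digit_walk N n c (x * N ^ p) + (\<Sum>j<L. c - 2 * real (digit_sum N n (x * N ^ p + j)))"
    unfolding digit_walk_def by (rule sum_lessThan_add)
  also have "(\<Sum>j<L. c - 2 * real (digit_sum N n (x * N ^ p + j)))
      = (\<Sum>j<L. (c - 2 * real (digit_sum N n j)) - 2 * real (digit_sum N (n - p) x))"
    using assms by (intro sum.cong refl) (simp add: digit_sum_mult_power_add)
  finally show ?thesis
    by (simp add: digit_walk_def sum_subtractf)
qed

lemma digit_walk_power:
  assumes "p \<le> n"
  shows "digit_walk N n c (N ^ p) = real N ^ p * (c - real p * (real N - 1))"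
  using sum_digit_sum_power[OF assms, of N]
  by (simp add: digit_walk_def sum_subtractf sum_distrib_left[symmetric] algebra_simps)

lemma digit_walk_mult_power:
  assumes "p < n" and "t \<le> N"
  shows "digit_walk N n c (t * N ^ p)
       = real t * digit_walk N n c (N ^ p) - real N ^ p * real t * (real t - 1)"
  using \<open>t \<le> N\<close>
proof (induction t)
  case 0
  then show ?case by (simp add: digit_walk_def)
next
  case (Suc t)
  have "digit_sum N (n - p) t = t"
    using Suc.prems assms(1) by (intro digit_sum_digit) simp_all
  then have "digit_walk N n c (Suc t * N ^ p)
      = digit_walk N n c (t * N ^ p) + digit_walk N n c (N ^ p) - 2 * real N ^ p * real t"
    using digit_walk_mult_power_add[of p n "N ^ p" N c t] assms(1) by (simp add: add.commute)
  then show ?case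
    using Suc by (simp add: algebra_simps)
qed

lemma digit_walk_digit_mult_power_add:
  assumes "p < n" and "u < N" and "L \<le> N ^ p"
  shows "digit_walk N n c (u * N ^ p + L)
       = real u * digit_walk N n c (N ^ p) - real N ^ p * real u * (real u - 1)
         + digit_walk N n c L - 2 * real L * real u"
proof -
  have "digit_sum N (n - p) u = u"
    using assms(1,2) by (intro digit_sum_digit) simp_all
  then show ?thesis
    using digit_walk_mult_power_add[of p n L N c u] digit_walk_mult_power[of p n u N c] assms
    by simp
qed

lemma digit_walk_le_mod_power:
  assumes "N > 0" and "p \<le> n" and "digit_walk N n c (N ^ p) \<le> 0"
  shows "digit_walk N n c K \<le> digit_walk N n c (K mod N ^ p)"
proof -
  have "digit_walk N n c (q * N ^ p) \<le> 0" for q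
  proof (induction q)
    case 0
    then show ?case by (simp add: digit_walk_def)
  next
    case (Suc q)
    have "digit_walk N n c (Suc q * N ^ p)
        = digit_walk N n c (q * N ^ p) + digit_walk N n c (N ^ p)
          - 2 * real (N ^ p) * real (digit_sum N (n - p) q)"
      using digit_walk_mult_power_add[of p n "N ^ p" N c q] assms(2) by (simp add: add.commute)
    moreover have "0 \<le> 2 * real (N ^ p) * real (digit_sum N (n - p) q)"
      by simp
    ultimately show ?case
      using Suc assms(3) by linarith
  qed
  moreover have "K mod N ^ p \<le> N ^ p"
    using assms(1) by (simp add: order.strict_implies_order)
  moreover have "0 \<le> 2 * real (K mod N ^ p) * real (digit_sum N (n - p) (K div N ^ p))"
    by simp
  ultimately show ?thesis
    using digit_walk_mult_power_add[OF assms(2), of "K mod N ^ p" N c "K div N ^ p"]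
    by (smt (verit) div_mult_mod_eq)
qed

lemma digit_walk_max_in_prefix:
  assumes N: "N \<ge> 2" and s: "1 \<le> s" "s \<le> N" and "m < n"
  shows "\<exists>K'\<le>s * N ^ m. digit_walk N n ((real N - 1) * real m + real s - 1) K
                        \<le> digit_walk N n ((real N - 1) * real m + real s - 1) K'"
proof -
  define c where "c = (real N - 1) * real m + real s - 1"
  define F where "F = digit_walk N n c"
  define M where "M = N ^ m"
  define R where "R = K mod N ^ Suc m"
  define t R' where "t = R div M" and "R' = R mod M"
  have "M > 0"
    using N by (simp add: M_def)
  have FM: "F M = real M * (real s - 1)"
    using digit_walk_power[of m n N c] \<open>m < n\<close> by (simp add: F_def M_def c_def algebra_simps)
  have "F (N ^ Suc m) = real N ^ Suc m * (real s - real N)"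
    using digit_walk_power[of "Suc m" n N c] \<open>m < n\<close> by (simp add: F_def c_def algebra_simps)
  then have "F (N ^ Suc m) \<le> 0"
    using s by (simp add: mult_nonneg_nonpos)
  then have FKR: "F K \<le> F R"
    using digit_walk_le_mod_power[of N "Suc m" n c K] N \<open>m < n\<close> by (simp add: F_def R_def)
  have R: "R = t * M + R'" and "R' < M"
    using \<open>M > 0\<close> by (simp_all add: t_def R'_def)
  have "t < N"
    using N by (simp add: t_def R_def M_def less_mult_imp_div_less)
  have F_split: "F (u * M + R') = real u * real M * (real s - 1) - real M * real u * (real u - 1)
                                   + F R' - 2 * real R' * real u" if "u < N" for u
    using digit_walk_digit_mult_power_add[OF \<open>m < n\<close> that, of R' c] \<open>R' < M\<close> FM
    by (simp add: F_def M_def)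
  show ?thesis
  proof (cases "t < s")
    case True
    then have "R \<le> s * M"
      using R \<open>R' < M\<close> mult_le_mono1[of "Suc t" s M] by simp
    then show ?thesis
      using FKR by (auto simp: F_def c_def M_def)
  next
    case False
    define K' where "K' = (s - 1) * M + R'"
    have "F R - F K'
        = - (real t - real s + 1) * (real M * (real t - 1) + 2 * real R')"
      using F_split[OF \<open>t < N\<close>] F_split[of "s - 1"] s
      by (simp add: R K'_def of_nat_diff algebra_simps)
    moreover have "0 \<le> (real t - real s + 1) * (real M * (real t - 1) + 2 * real R')"
      using False s by simp
    ultimately have "F R \<le> F K'"
      by linarith
    moreover have "K' \<le> s * M"
      using \<open>R' < M\<close> s by (simp add: K'_def algebra_simps)
    ultimately show ?thesis
      using FKR by (auto simp: F_def c_def M_def intro!: exI[of _ K'])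
  qed
qed

lemma digit_walk_max_in_prefix_from_1:
  assumes N: "N \<ge> 2" and s: "1 \<le> s" "s \<le> N" and "m < n"
  shows "\<exists>K'\<in>{1..s * N ^ m}. digit_walk N n ((real N - 1) * real m + real s - 1) K
                        \<le> digit_walk N n ((real N - 1) * real m + real s - 1) K'"
proof -
  let ?F = "digit_walk N n ((real N - 1) * real m + real s - 1)"
  obtain K' where K': "K' \<le> s * N ^ m" "?F K \<le> ?F K'"
    using digit_walk_max_in_prefix[OF assms] by blast
  have "0 \<le> (real N - 1) * real m"
    using N by simp
  moreover have "?F 0 = 0" and "?F 1 = (real N - 1) * real m + real s - 1"
    by (simp_all add: digit_walk_def)
  ultimately have "?F 0 \<le> ?F 1"
    using s by linarith
  moreover have "1 \<le> s * N ^ m"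
    using N s by simp
  ultimately show ?thesis
  proof (cases "K' = 0")
    case True
    then show ?thesis
      using K' \<open>?F 0 \<le> ?F 1\<close> \<open>1 \<le> s * N ^ m\<close> by (intro bexI[of _ 1]) auto
  next
    case False
    then show ?thesis
      using K' by (intro bexI[of _ K']) auto
  qed
qed

lemma mult_power_le_power:
  fixes N :: nat
  assumes "s \<le> N" and "N > 0" and "m < n"
  shows "s * N ^ m \<le> N ^ n"
proof -
  have "s * N ^ m \<le> N ^ Suc m"
    using assms(1) by simp
  also have "\<dots> \<le> N ^ n"
    using assms(2,3) by (intro power_increasing) simp_all
  finally show ?thesis .
qed

lemma hamiltonian_gamma_le_prefix:
  assumes N: "N \<ge> 2" and "Jt > 0"
    and J: "\<And>i. 1 \<le> i \<Longrightarrow> i \<le> n \<Longrightarrow> J i = Jt / real N ^ i"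
    and "1 \<le> s" and "s \<le> N" and "m < n" and "i \<le> N ^ n"
  shows "\<exists>j\<in>{1..s * N ^ m}. hamiltonian N n J (hfield N n Jt (int m) (int s)) (gamma i)
                          \<le> hamiltonian N n J (hfield N n Jt (int m) (int s)) (gamma j)"
proof -
  let ?F = "digit_walk N n ((real N - 1) * real m + real s - 1)"
  obtain j where j: "j \<in> {1..s * N ^ m}" "?F i \<le> ?F j"
    using digit_walk_max_in_prefix_from_1[OF N \<open>1 \<le> s\<close> \<open>s \<le> N\<close> \<open>m < n\<close>] by blast
  have "j \<le> N ^ n"
    using j(1) mult_power_le_power[OF \<open>s \<le> N\<close> _ \<open>m < n\<close>] N by simp
  moreover have "Jt / real N * ?F i \<le> Jt / real N * ?F j"
    using j(2) \<open>Jt > 0\<close> by (intro mult_left_mono) simp_all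
  ultimately show ?thesis
    using j(1) hamiltonian_gamma_digit_walk[where m = m and s = s, OF N \<open>i \<le> N ^ n\<close> J]
      hamiltonian_gamma_digit_walk[where m = m and s = s, OF N \<open>j \<le> N ^ n\<close> J]
    by (intro bexI[of _ j]) linarith+
qed

lemma Max_image_eq_of_dominated:
  fixes f :: "'a \<Rightarrow> 'b::linorder"
  assumes "finite A" and "B \<subseteq> A" and "B \<noteq> {}" and dominated: "\<And>i. i \<in> A \<Longrightarrow> \<exists>j\<in>B. f i \<le> f j"
  shows "Max (f ` A) = Max (f ` B)"
proof (rule antisym)
  have "finite B"
    using assms(1,2) by (rule finite_subset[rotated])
  obtain i where "i \<in> A" and "Max (f ` A) = f i"
    using assms Max_in[of "f ` A"] by blast
  then show "Max (f ` A) \<le> Max (f ` B)"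
    using dominated \<open>finite B\<close> by (force intro: order.trans Max_ge)
  show "Max (f ` B) \<le> Max (f ` A)"
    using assms by (intro Max_mono) auto
qed

theorem lemma4p3:
  fixes N n :: nat and Jt :: real and J :: "nat \<Rightarrow> real" and s m :: nat
  assumes "N \<ge> 2" and "n \<ge> 1" and "Jt > 0"
    and "\<And>i. 1 \<le> i \<Longrightarrow> i \<le> n \<Longrightarrow> J i = Jt / real N ^ i"
    and "1 \<le> s" and "s \<le> N" and "m \<le> n - 1"
  shows "Max ((\<lambda>i. hamiltonian N n J (hfield N n Jt (int m) (int s)) (gamma i)) ` {1..N ^ n})
       = Max ((\<lambda>i. hamiltonian N n J (hfield N n Jt (int m) (int s)) (gamma i)) ` {1..s * N ^ m})"
proof (rule Max_image_eq_of_dominated)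
  have "m < n"
    using assms(2,7) by linarith
  then show "{1..s * N ^ m} \<subseteq> {1..N ^ n}"
    using mult_power_le_power[OF assms(6)] assms(1) by fastforce
  show "{1..s * N ^ m} \<noteq> {}"
    using assms(1,5) by simp
  show "\<exists>j\<in>{1..s * N ^ m}. hamiltonian N n J (hfield N n Jt (int m) (int s)) (gamma i)
                          \<le> hamiltonian N n J (hfield N n Jt (int m) (int s)) (gamma j)"
    if "i \<in> {1..N ^ n}" for i
    using hamiltonian_gamma_le_prefix[OF assms(1,3,4,5,6) \<open>m < n\<close>] that by simp
qed simp

end
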